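(* Let $n\ge2$, $\sigma\ge2$, and let $s$ be a random string of length $n$ with characters i.i.d. uniform over an alphabet of size $\sigma$; let $r$ be its number of maximal runs, $X=r-1$, $q=(2-\sigma)/\sigma$, and $\mathcal{K}(s)$ its peeling kernel. Then $\mathcal{K}(s)$ consists of exactly one distinct symbol iff $r$ is odd iff $X$ is even, and consists of exactly two distinct symbols otherwise. Hence \[\Pr\bigl(|\mathrm{alphabet}(\mathcal{K}(s))|=1\bigr)=\tfrac12\bigl(1+q^{n-1}\bigr),\] which equals $1/2$ exactly when $\sigma=2$, and for $\sigma\ge3$ converges to $1/2$ exponentially fast in $n$.
   Context: A maximal run of a string is a maximal block of consecutive equal symbols. Let $\texttt{@},\texttt{\$}$ be two distinct symbols not in the alphabet. For a string $s$ of length $n$ let $\hat s=\texttt{@}\,s\,\texttt{\$}$ (positions $1,\dots,n+2$); $\hat s[i..j)$ is the substring at positions $i,\dots,j-1$. The leading (trailing) run of a non-empty string is its longest prefix (suffix) consisting of one repeated symbol. The Flashback decomposition $\mathcal{F}(s)$ is the sequence of tokens (pairs $(\sigma,p)$) produced as follows, starting from active span $[lo,hi)=[1,n+3)$: if $lo\ge hi$, stop. Let $\ell$ be the leading-run length of $\hat s[lo..hi)$. If $\ell=hi-lo$, append $(\hat s[lo..hi),0)$ and stop. Otherwise let $\hat s[r'..hi)$ be the trailing run of $\hat s[lo..hi)$ and $\sigma=\hat s[lo..lo+\ell)\cdot\hat s[r'..hi)$; if $lo+\ell\ge r'$, append $(\sigma,0)$ and stop; otherwise append $(\sigma,\ell)$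 and repeat with $[lo+\ell,r')$. The peeling kernel $\mathcal{K}(s)$ is the symbol string of the last token of $\mathcal{F}(s)$, and $\mathrm{alphabet}(w)$ is the set of symbols occurring in $w$. *)

theory Defs
  imports Complex_Main
begin

datatype 'a hsym = At | Dollar | Ch 'a

definition hat :: "'a list \<Rightarrow> 'a hsym list" where
  "hat s = At # map Ch s @ [Dollar]"

definition lead_run :: "'a list \<Rightarrow> nat" where
  "lead_run w = length (takeWhile (\<lambda>x. x = hd w) w)"

definition trail_run :: "'a list \<Rightarrow> nat" where
  "trail_run w = lead_run (rev w)"

lemma lead_run_pos: "w \<noteq> [] \<Longrightarrow> 0 < lead_run w"
  by (cases w) (auto simp: lead_run_def)

text \<open>Flashback decomposition, applied to the active span itself
  (the active span is the substring \<open>hat s[lo..hi)\<close>); the recursive call is on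
  the substring \<open>[lo+l, r')\<close>.\<close>
function flashback :: "'a list \<Rightarrow> ('a list \<times> nat) list" where
  "flashback w =
    (if w = [] then []
     else let l = lead_run w in
       if l = length w then [(w, 0)]
       else let t = trail_run w; r = length w - t;
                sig = take l w @ drop r w in
         if l \<ge> r then [(sig, 0)]
         else (sig, l) # flashback (take (r - l) (drop l w)))"
  by pat_completeness auto
termination
  by (relation "measure length") (auto simp: lead_run_pos)

definition flashback_decomp :: "'a list \<Rightarrow> ('a hsym list \<times> nat) list" where
  "flashback_decomp s = flashback (hat s)"

definition peeling_kernel :: "'a list \<Rightarrow> 'a hsym list" where
  "peeling_kernel s = fst (last (flashback_decomp s))"

definition num_runs :: "'a list \<Rightarrow> nat" where
  "num_runs s = length (remdups_adj s)"

definition strings :: "nat \<Rightarrow> nat \<Rightarrow> nat list set" where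
  "strings n \<sigma> = {s. length s = n \<and> set s \<subseteq> {0..<\<sigma>}}"

definition prob_one_sym :: "nat \<Rightarrow> nat \<Rightarrow> real" where
  "prob_one_sym n \<sigma> =
     real (card {s \<in> strings n \<sigma>. card (set (peeling_kernel s)) = 1}) / real (card (strings n \<sigma>))"

end

theory Submission
  imports Defs
begin

text \<open>Each peeling step removes the leading and the trailing run of the active span, which are
  two distinct maximal runs, and leaves the remaining runs untouched.  Hence the parity of the
  number of runs is invariant, and peeling stops at a span of one run (one symbol) or of two runs
  (two symbols).  The sentinels add two runs, so the kernel has one symbol iff \<open>s\<close> has an odd
  number of runs.  Writing \<open>(-1) ^ num_runs\<close> as the sign of a string, prepending a symbol \<open>c\<close> to a
  nonempty string keeps its sign for one choice of \<open>c\<close> and flips it for the other \<open>\<sigma> - 1\<close>, so the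
  signed count of strings of length \<open>n\<close> is \<open>-\<sigma> (2 - \<sigma>) ^ (n - 1)\<close>; this gives the probability.\<close>

lemma remdups_adj_replicate_append:
  assumes "0 < l" "v = [] \<or> hd v \<noteq> a"
  shows "remdups_adj (replicate l a @ v) = a # remdups_adj v"
  using assms by (cases l; cases v) (simp_all add: remdups_adj_Cons' dropWhile_append)

lemma remdups_adj_append_replicate:
  assumes "0 < t" "u = [] \<or> last u \<noteq> b"
  shows "remdups_adj (u @ replicate t b) = remdups_adj u @ [b]"
proof -
  have "rev (remdups_adj (u @ replicate t b)) = remdups_adj (replicate t b @ rev u)"
    by (simp flip: remdups_adj_rev)
  also have "\<dots> = b # rev (remdups_adj u)"
    using remdups_adj_replicate_append[of t "rev u" b] assms by (simp add: hd_rev)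
  finally show ?thesis
    by (metis rev.simps(2) rev_rev_ident)
qed

lemma lead_run_replicate_append:
  assumes "0 < l" "v = [] \<or> hd v \<noteq> a"
  shows "lead_run (replicate l a @ v) = l"
  using assms by (cases l; cases v) (simp_all add: lead_run_def takeWhile_append)

lemma trail_run_append_replicate:
  assumes "0 < t" "u = [] \<or> last u \<noteq> b"
  shows "trail_run (u @ replicate t b) = t"
  using lead_run_replicate_append[of t "rev u" b] assms by (auto simp: trail_run_def hd_rev)

lemma split_leading_run:
  assumes "w \<noteq> []"
  obtains l a v where "0 < l" "w = replicate l a @ v" "v = [] \<or> hd v \<noteq> a"
proof -
  let ?P = "\<lambda>x. x = hd w"
  have "takeWhile ?P w = replicate (length (takeWhile ?P w)) (hd w)"
    by (metis (mono_tags, lifting) replicate_length_same set_takeWhileD)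
  moreover have "0 < length (takeWhile ?P w)"
    using assms by (cases w) auto
  moreover have "dropWhile ?P w = [] \<or> hd (dropWhile ?P w) \<noteq> hd w"
    using hd_dropWhile[of ?P w] by blast
  ultimately show thesis
    using that takeWhile_dropWhile_id[of ?P w] by metis
qed

lemma split_trailing_run:
  assumes "w \<noteq> []"
  obtains u t b where "0 < t" "w = u @ replicate t b" "u = [] \<or> last u \<noteq> b"
proof -
  obtain t b v where t: "0 < t" and w: "rev w = replicate t b @ v" and v: "v = [] \<or> hd v \<noteq> b"
    using split_leading_run[of "rev w"] assms by auto
  have "w = rev v @ replicate t b"
    using arg_cong[OF w, of rev] by simp
  moreover have "rev v = [] \<or> last (rev v) \<noteq> b"
    using v by (auto simp: last_rev)
  ultimately show thesis
    using that t by blast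
qed

lemma list_run_cases:
  assumes "w \<noteq> []"
  obtains (one_run) l a where "0 < l" "w = replicate l a"
  | (two_runs) l a t b where "0 < l" "0 < t" "a \<noteq> b" "w = replicate l a @ replicate t b"
  | (more_runs) l a m t b where "0 < l" "0 < t" "m \<noteq> []" "hd m \<noteq> a" "last m \<noteq> b"
      "w = replicate l a @ m @ replicate t b"
proof -
  obtain l a v where l: "0 < l" and w: "w = replicate l a @ v" and v: "v = [] \<or> hd v \<noteq> a"
    using split_leading_run[OF assms] .
  show thesis
  proof (cases "v = []")
    case True
    with w have "w = replicate l a" by simp
    then show thesis by (rule one_run[OF l])
  next
    case False
    then obtain m t b where t: "0 < t" and vm: "v = m @ replicate t b" and m: "m = [] \<or> last m \<noteq> b"
      by (rule split_trailing_run)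
    show thesis
    proof (cases "m = []")
      case True
      then have "a \<noteq> b" using v vm t by (cases t) auto
      show thesis by (rule two_runs[OF l t \<open>a \<noteq> b\<close>]) (simp add: w vm True)
    next
      case False
      have "hd m \<noteq> a" using v vm False by auto
      moreover have "last m \<noteq> b" using m False by simp
      ultimately show thesis by (rule more_runs[OF l t False]) (simp add: w vm)
    qed
  qed
qed

declare flashback.simps [simp del]

lemma flashback_eq_Nil_iff [simp]: "flashback w = [] \<longleftrightarrow> w = []"
  by (subst flashback.simps) (auto simp: Let_def)

lemma flashback_replicate: "0 < l \<Longrightarrow> flashback (replicate l a) = [(replicate l a, 0)]"
  using lead_run_replicate_append[of l "[]" a] by (subst flashback.simps) auto

lemma flashback_two_runs:
  assumes "0 < l" "0 < t" "a \<noteq> b"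
  shows "flashback (replicate l a @ replicate t b) = [(replicate l a @ replicate t b, 0)]"
proof -
  have "lead_run (replicate l a @ replicate t b) = l"
    using assms by (intro lead_run_replicate_append) (auto simp: hd_replicate)
  moreover have "trail_run (replicate l a @ replicate t b) = t"
    using assms by (intro trail_run_append_replicate) auto
  ultimately show ?thesis
    using assms by (subst flashback.simps) (simp add: Let_def)
qed

lemma flashback_peel:
  assumes "0 < l" "0 < t" "m \<noteq> []" "hd m \<noteq> a" "last m \<noteq> b"
  shows "flashback (replicate l a @ m @ replicate t b) =
           (replicate l a @ replicate t b, l) # flashback m"
proof -
  have "lead_run (replicate l a @ m @ replicate t b) = l"
    using assms by (intro lead_run_replicate_append) auto
  moreover have "trail_run ((replicate l a @ m) @ replicate t b) = t"
    using assms by (intro trail_run_append_replicate) auto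
  ultimately show ?thesis
    using assms by (subst flashback.simps) (simp add: Let_def)
qed

lemma card_set_last_flashback:
  "w \<noteq> [] \<Longrightarrow>
     card (set (fst (last (flashback w)))) = (if odd (length (remdups_adj w)) then 1 else 2)"
proof (induction "length w" arbitrary: w rule: less_induct)
  case less
  from less.prems show ?case
  proof (cases rule: list_run_cases)
    case (one_run l a)
    then show ?thesis by (simp add: flashback_replicate remdups_adj_replicate)
  next
    case (two_runs l a t b)
    then show ?thesis
      by (simp add: flashback_two_runs remdups_adj_replicate_append remdups_adj_replicate)
  next
    case (more_runs l a m t b)
    have "length m < length w" using more_runs by simp
    with less.hyps more_runs(3)
    have IH: "card (set (fst (last (flashback m)))) = (if odd (length (remdups_adj m)) then 1 else 2)"
      by blast
    have "remdups_adj w = a # remdups_adj m @ [b]"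
      using more_runs by (simp add: remdups_adj_replicate_append remdups_adj_append_replicate)
    then show ?thesis using IH more_runs by (simp add: flashback_peel)
  qed
qed

lemma remdups_adj_hat:
  assumes "s \<noteq> []"
  shows "remdups_adj (hat s) = At # map Ch (remdups_adj s) @ [Dollar]"
proof -
  have "remdups_adj (hat s) = remdups_adj (replicate 1 At @ map Ch s @ replicate 1 Dollar)"
    by (simp add: hat_def)
  also have "\<dots> = At # remdups_adj (map Ch s @ replicate 1 Dollar)"
    using assms by (intro remdups_adj_replicate_append) (auto simp: hd_map)
  also have "remdups_adj (map Ch s @ replicate 1 Dollar) = remdups_adj (map Ch s) @ [Dollar]"
    using assms by (intro remdups_adj_append_replicate) (auto simp: last_map)
  finally show ?thesis
    by (simp add: remdups_adj_map_injective inj_def)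
qed

lemma card_set_peeling_kernel:
  "s \<noteq> [] \<Longrightarrow> card (set (peeling_kernel s)) = (if odd (num_runs s) then 1 else 2)"
  using card_set_last_flashback[of "hat s"]
  by (simp add: peeling_kernel_def flashback_decomp_def remdups_adj_hat num_runs_def)
    (simp add: hat_def)

lemma sum_lists_length_Suc:
  "(\<Sum>s | set s \<subseteq> A \<and> length s = Suc n. f s) =
     (\<Sum>s | set s \<subseteq> A \<and> length s = n. \<Sum>c\<in>A. f (c # s))"
  by (simp add: lists_length_Suc_eq sum.reindex[OF inj_split_Cons] sum.cartesian_product
      prod.case_distrib)

lemma num_runs_Cons_Cons:
  "num_runs (c # x # s) = (if c = x then num_runs (x # s) else Suc (num_runs (x # s)))"
  by (simp add: num_runs_def)

lemma sum_sign_num_runs_Cons: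
  assumes "finite A" "x \<in> A"
  shows "(\<Sum>c\<in>A. (-1::real) ^ num_runs (c # x # s)) = (2 - real (card A)) * (-1) ^ num_runs (x # s)"
proof -
  define r :: real where "r = (-1) ^ num_runs (x # s)"
  have "(\<Sum>c\<in>A. (-1::real) ^ num_runs (c # x # s)) = (\<Sum>c\<in>A. - r + (if c = x then 2 * r else 0))"
    by (rule sum.cong) (auto simp: num_runs_Cons_Cons r_def)
  also have "\<dots> = - real (card A) * r + 2 * r"
    using assms by (simp add: sum.distrib sum_subtractf)
  finally show ?thesis
    by (simp add: r_def algebra_simps)
qed

lemma sum_sign_num_runs:
  assumes "finite A" "0 < n"
  shows "(\<Sum>s | set s \<subseteq> A \<and> length s = n. (-1::real) ^ num_runs s) =
           - real (card A) * (2 - real (card A)) ^ (n - 1)"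
  using assms(2)
proof (induction n rule: nat_induct_non_zero)
  case 1
  have "{s. set s \<subseteq> A \<and> length s = 0} = {[]}" by auto
  then show ?case by (simp add: sum_lists_length_Suc num_runs_def)
next
  case (Suc n)
  have "(\<Sum>s | set s \<subseteq> A \<and> length s = Suc n. (-1::real) ^ num_runs s) =
        (\<Sum>s | set s \<subseteq> A \<and> length s = n. (2 - real (card A)) * (-1) ^ num_runs s)"
    unfolding sum_lists_length_Suc
  proof (rule sum.cong)
    fix s assume "s \<in> {s. set s \<subseteq> A \<and> length s = n}"
    with \<open>0 < n\<close> obtain x s' where "s = x # s'" "x \<in> A"
      by (cases s) auto
    then show "(\<Sum>c\<in>A. (-1::real) ^ num_runs (c # s)) = (2 - real (card A)) * (-1) ^ num_runs s"
      using sum_sign_num_runs_Cons[OF assms(1)] by simp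
  qed simp
  also have "\<dots> = (2 - real (card A)) * (\<Sum>s | set s \<subseteq> A \<and> length s = n. (-1) ^ num_runs s)"
    by (simp add: sum_distrib_left)
  also have "\<dots> = - real (card A) * (2 - real (card A)) ^ (Suc n - 1)"
    unfolding Suc.IH using \<open>0 < n\<close> by (cases n) (simp_all add: mult_ac)
  finally show ?case .
qed

lemma card_lists_odd_num_runs:
  assumes "finite A" "0 < n"
  shows "real (card {s. set s \<subseteq> A \<and> length s = n \<and> odd (num_runs s)}) =
           (real (card A) ^ n + real (card A) * (2 - real (card A)) ^ (n - 1)) / 2"
proof -
  let ?L = "{s. set s \<subseteq> A \<and> length s = n}"
  let ?O = "{s. set s \<subseteq> A \<and> length s = n \<and> odd (num_runs s)}"
  have "?O = {s \<in> ?L. odd (num_runs s)}"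
    by auto
  then have odd_count: "(\<Sum>s\<in>?L. if odd (num_runs s) then 1 else 0) = real (card ?O)"
    using finite_lists_length_eq[OF assms(1)] by (simp add: sum.inter_filter[symmetric])
  have "(\<Sum>s\<in>?L. (-1::real) ^ num_runs s) = (\<Sum>s\<in>?L. 1 - 2 * (if odd (num_runs s) then 1 else 0))"
    by (rule sum.cong) auto
  also have "\<dots> = real (card ?L) - 2 * real (card ?O)"
    by (simp only: sum_subtractf sum_distrib_left[symmetric] odd_count) simp
  finally have "real (card ?O) = (real (card ?L) - (\<Sum>s\<in>?L. (-1::real) ^ num_runs s)) / 2"
    by simp
  also have "\<dots> = (real (card A) ^ n + real (card A) * (2 - real (card A)) ^ (n - 1)) / 2"
    by (simp add: sum_sign_num_runs[OF assms] card_lists_length_eq[OF assms(1)])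
  finally show ?thesis .
qed

lemma prob_one_sym_eq:
  assumes "0 < n" "0 < \<sigma>"
  shows "prob_one_sym n \<sigma> = (1 + ((2 - real \<sigma>) / real \<sigma>) ^ (n - 1)) / 2"
proof -
  have "{s \<in> strings n \<sigma>. card (set (peeling_kernel s)) = 1} =
        {s. set s \<subseteq> {0..<\<sigma>} \<and> length s = n \<and> odd (num_runs s)}"
    using assms(1) by (auto simp: strings_def card_set_peeling_kernel)
  moreover have "strings n \<sigma> = {s. set s \<subseteq> {0..<\<sigma>} \<and> length s = n}"
    by (auto simp: strings_def)
  ultimately have "prob_one_sym n \<sigma> =
      (real \<sigma> ^ n + real \<sigma> * (2 - real \<sigma>) ^ (n - 1)) / 2 / real \<sigma> ^ n"
    using assms(1) by (simp add: prob_one_sym_def card_lists_odd_num_runs card_lists_length_eq)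
  also have "\<dots> = (1 + ((2 - real \<sigma>) / real \<sigma>) ^ (n - 1)) / 2"
    using assms by (cases n) (simp_all add: field_simps power_divide)
  finally show ?thesis .
qed

lemma prob_one_sym_eq_half_iff:
  assumes "2 \<le> n" "0 < \<sigma>"
  shows "prob_one_sym n \<sigma> = 1 / 2 \<longleftrightarrow> \<sigma> = 2"
  using prob_one_sym_eq[of n \<sigma>] assms by auto

lemma abs_two_minus_div_bounds:
  fixes \<sigma> :: nat
  assumes "3 \<le> \<sigma>"
  shows "0 < \<bar>(2 - real \<sigma>) / real \<sigma>\<bar>" "\<bar>(2 - real \<sigma>) / real \<sigma>\<bar> < 1"
proof -
  have q: "\<bar>(2 - real \<sigma>) / real \<sigma>\<bar> = (real \<sigma> - 2) / real \<sigma>"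
    using assms by (simp add: abs_divide)
  show "0 < \<bar>(2 - real \<sigma>) / real \<sigma>\<bar>" "\<bar>(2 - real \<sigma>) / real \<sigma>\<bar> < 1"
    unfolding q using assms by simp_all
qed

lemma prob_one_sym_tendsto_half:
  assumes "3 \<le> \<sigma>"
  shows "(\<lambda>n. prob_one_sym n \<sigma>) \<longlonglongrightarrow> 1 / 2"
proof -
  define q where "q = (2 - real \<sigma>) / real \<sigma>"
  have "\<bar>q\<bar> < 1"
    unfolding q_def by (rule abs_two_minus_div_bounds[OF assms])
  have "(\<lambda>n. prob_one_sym (Suc n) \<sigma>) = (\<lambda>n. (1 + q ^ n) / 2)"
    using assms by (simp add: prob_one_sym_eq q_def)
  moreover have "(\<lambda>n. (1 + q ^ n) / 2) \<longlonglongrightarrow> (1 + 0) / 2"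
    using \<open>\<bar>q\<bar> < 1\<close> by (intro tendsto_divide tendsto_add tendsto_const LIMSEQ_power_zero) simp_all
  ultimately have "(\<lambda>n. prob_one_sym (Suc n) \<sigma>) \<longlonglongrightarrow> 1 / 2"
    by simp
  then show ?thesis
    by (rule LIMSEQ_imp_Suc)
qed

lemma prob_one_sym_exponential_rate:
  assumes "3 \<le> \<sigma>"
  obtains c C where "0 < c" "c < 1" "\<And>n. 0 < n \<Longrightarrow> \<bar>prob_one_sym n \<sigma> - 1 / 2\<bar> = C * c ^ n"
proof
  define q where "q = (2 - real \<sigma>) / real \<sigma>"
  show "0 < \<bar>q\<bar>" "\<bar>q\<bar> < 1"
    unfolding q_def by (fact abs_two_minus_div_bounds[OF assms])+
  fix n :: nat
  assume "0 < n"
  then obtain k where "n = Suc k" by (cases n) auto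
  with assms have "prob_one_sym n \<sigma> - 1 / 2 = q ^ k / 2"
    by (simp add: prob_one_sym_eq q_def add_divide_distrib)
  then have "\<bar>prob_one_sym n \<sigma> - 1 / 2\<bar> = \<bar>q ^ k / 2\<bar>"
    by (rule arg_cong)
  also have "\<dots> = \<bar>q\<bar> ^ k / 2"
    by (simp add: power_abs)
  also have "\<dots> = 1 / (2 * \<bar>q\<bar>) * \<bar>q\<bar> ^ n"
    using \<open>n = Suc k\<close> \<open>0 < \<bar>q\<bar>\<close> by simp
  finally show "\<bar>prob_one_sym n \<sigma> - 1 / 2\<bar> = 1 / (2 * \<bar>q\<bar>) * \<bar>q\<bar> ^ n" .
qed

theorem corollaryA2:
  fixes \<sigma> :: nat
  assumes "\<sigma> \<ge> 2"
  defines "q \<equiv> (2 - real \<sigma>) / real \<sigma>"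
  shows "(\<forall>n \<ge> 2. \<forall>s \<in> strings n \<sigma>.
            (card (set (peeling_kernel s)) = 1 \<longleftrightarrow> odd (num_runs s)) \<and>
            (odd (num_runs s) \<longleftrightarrow> even (num_runs s - 1)) \<and>
            (\<not> odd (num_runs s) \<longrightarrow> card (set (peeling_kernel s)) = 2))
       \<and> (\<forall>n \<ge> 2. prob_one_sym n \<sigma> = (1 + q ^ (n - 1)) / 2)
       \<and> (\<forall>n \<ge> 2. prob_one_sym n \<sigma> = 1 / 2 \<longleftrightarrow> \<sigma> = 2)
       \<and> (\<sigma> \<ge> 3 \<longrightarrow>
            (\<lambda>n. prob_one_sym n \<sigma>) \<longlonglongrightarrow> 1 / 2 \<and>
            (\<exists>C c. 0 < c \<and> c < 1 \<and> (\<forall>n \<ge> 2. \<bar>prob_one_sym n \<sigma> - 1 / 2\<bar> \<le> C * c ^ n)))"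
proof (intro conjI impI)
  have "s \<noteq> []" if "2 \<le> n" "s \<in> strings n \<sigma>" for n s
    using that by (auto simp: strings_def)
  then show "\<forall>n \<ge> 2. \<forall>s \<in> strings n \<sigma>.
            (card (set (peeling_kernel s)) = 1 \<longleftrightarrow> odd (num_runs s)) \<and>
            (odd (num_runs s) \<longleftrightarrow> even (num_runs s - 1)) \<and>
            (\<not> odd (num_runs s) \<longrightarrow> card (set (peeling_kernel s)) = 2)"
    by (fastforce simp: card_set_peeling_kernel num_runs_def)
  show "\<forall>n \<ge> 2. prob_one_sym n \<sigma> = (1 + q ^ (n - 1)) / 2"
    using assms by (simp add: prob_one_sym_eq q_def)
  show "\<forall>n \<ge> 2. prob_one_sym n \<sigma> = 1 / 2 \<longleftrightarrow> \<sigma> = 2"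
    using prob_one_sym_eq_half_iff assms by simp
  assume "3 \<le> \<sigma>"
  then show "(\<lambda>n. prob_one_sym n \<sigma>) \<longlonglongrightarrow> 1 / 2"
    by (rule prob_one_sym_tendsto_half)
  show "\<exists>C c. 0 < c \<and> c < 1 \<and> (\<forall>n \<ge> 2. \<bar>prob_one_sym n \<sigma> - 1 / 2\<bar> \<le> C * c ^ n)"
  proof (rule prob_one_sym_exponential_rate[OF \<open>3 \<le> \<sigma>\<close>])
    fix c C
    assume "0 < c" "c < 1" "\<And>n. 0 < n \<Longrightarrow> \<bar>prob_one_sym n \<sigma> - 1 / 2\<bar> = C * c ^ n"
    then show ?thesis by (intro exI[of _ C] exI[of _ c]) auto
  qed
qed

end
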